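(* Let $N, K \ge 1$ be integers and let $\lambda^-, \lambda^+ \in [-1,1]$. Let $W \in \mathbb{R}^{N\times N}$ belong to the class $\mathcal{W}(\lambda^-,\lambda^+)$ (defined in the context), and let $X, Y \in \mathbb{R}^{N\times K}$ satisfy $Y = WX$. Write $X = \mathbf{1}\bar{X}^T + X_c$ and $Y = \mathbf{1}\bar{Y}^T + Y_c$, where $\mathbf{1} = [1,\dots,1]^T \in \mathbb{R}^N$ and $\bar{X}, \bar{Y} \in \mathbb{R}^K$ are the column averages, $\bar{X}_k = \frac1N\sum_{i=1}^N X_{ik}$, $\bar{Y}_k = \frac1N\sum_{i=1}^N Y_{ik}$. Then: (i) the matrices $X^TY$ and $X_c^TY_c$ are symmetric; (ii) the following hold: $$\bar{X} = \bar{Y},$$ $$\lambda^- X_c^TX_c \preceq X_c^TY_c \preceq \lambda^+ X_c^TX_c,$$ $$(Y_c - \lambda^- X_c)^T(Y_c - \lambda^+ X_c) \preceq 0,$$ where $A \preceq B$ means $B - A$ is positive semidefinite; (iii) the three constraints in (ii) are LMI Gram-representable, i.e. each can be expressed as a finite set of linear matrix inequality (or linear) constraints in the entries of the Gram matrix of the scalars/vectors $\{X_{ik}, Y_{ik}\}_{i,k}$.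
   Context: $\mathcal{W}(\lambda^-,\lambda^+)$ denotes the set of real symmetric $N\times N$ matrices $W$ that are generalized doubly stochastic (i.e. $\sum_{i=1}^N w_{ij} = 1$ for all $j$ and $\sum_{j=1}^N w_{ij}=1$ for all $i$, with no nonnegativity requirement on the entries), and whose eigenvalues, apart from the eigenvalue $\lambda_1 = 1$ (associated with the eigenvector $\mathbf{1}$), all lie in $[\lambda^-,\lambda^+]$: $\lambda^- \le \lambda_N \le \dots \le \lambda_2 \le \lambda^+$. In the application, $X_{ik} = x_i^k$ and $Y_{ik} = y_i^k$ are one-dimensional local variables of agent $i$ at consensus step $k$, and the consensus step is $y_i^k = \sum_j w_{ij} x_j^k$. A constraint is called linearly (resp. LMI) Gram-representable if it can be expressed using a finite set of linear (resp. linear matrix inequality) constraints involving (parts of) the Gram matrix $G = P^TP$ of the variables collected as columns of $P$ (and possibly a vector of function values). *)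

theory Defs
  imports "HOL-Analysis.Analysis"
begin

text \<open>Matrices are rendered as \<open>real^'c^'r\<close> (rows indexed by 'r, columns by 'c).
  The agent index type 'n has N = CARD('n) elements, the step index type 'k has K = CARD('k).\<close>

definition ones :: "real^'n" where
  "ones = (\<chi> i. 1)"

definition gen_doubly_stochastic :: "real^'n^'n \<Rightarrow> bool" where
  "gen_doubly_stochastic W \<longleftrightarrow>
     (\<forall>j. (\<Sum>i\<in>UNIV. W$i$j) = 1) \<and> (\<forall>i. (\<Sum>j\<in>UNIV. W$i$j) = 1)"

definition symmetric_mat :: "real^'n^'n \<Rightarrow> bool" where
  "symmetric_mat A \<longleftrightarrow> transpose A = A"

text \<open>Eigenvalues other than the eigenvalue 1 associated with the eigenvector ones:
  for a real symmetric W with W ones = ones, these are exactly the eigenvalues of W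
  on the orthogonal complement of ones.\<close>
definition W_class :: "real \<Rightarrow> real \<Rightarrow> real^'n^'n \<Rightarrow> bool" where
  "W_class lm lp W \<longleftrightarrow> symmetric_mat W \<and> gen_doubly_stochastic W \<and>
     (\<forall>(v::real^'n) (\<mu>::real). v \<noteq> 0 \<and> v \<bullet> ones = 0 \<and> W *v v = \<mu> *\<^sub>R v
        \<longrightarrow> lm \<le> \<mu> \<and> \<mu> \<le> lp)"

definition psd :: "real^'n^'n \<Rightarrow> bool" where
  "psd A \<longleftrightarrow> (\<forall>x. 0 \<le> x \<bullet> (A *v x))"

definition loewner_le :: "real^'n^'n \<Rightarrow> real^'n^'n \<Rightarrow> bool" (infix "\<preceq>\<^sub>L" 50) where
  "A \<preceq>\<^sub>L B \<longleftrightarrow> psd (B - A)"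

definition colavg :: "real^'k^'n \<Rightarrow> real^'k" where
  "colavg X = (\<chi> k. (\<Sum>i\<in>UNIV. X$i$k) / real CARD('n))"

definition centered :: "real^'k^'n \<Rightarrow> real^'k^'n" where
  "centered X = (\<chi> i k. X$i$k - colavg X $ k)"

definition gram_vars :: "real^'k^'n \<Rightarrow> real^'k^'n \<Rightarrow> real^(('n \<times> 'k) + ('n \<times> 'k))" where
  "gram_vars X Y = (\<chi> a. case a of Inl (i,k) \<Rightarrow> X$i$k | Inr (i,k) \<Rightarrow> Y$i$k)"

definition gram :: "real^'k^'n \<Rightarrow> real^'k^'n \<Rightarrow> real^(('n \<times> 'k) + ('n \<times> 'k))^(('n \<times> 'k) + ('n \<times> 'k))" where
  "gram X Y = (\<chi> a b. gram_vars X Y $ a * gram_vars X Y $ b)"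

text \<open>Linear equality constraints are covered since a = 0 iff a I \<succeq> 0 and -a I \<succeq> 0.\<close>
definition lmi_gram_representable :: "(real^'k^'n \<Rightarrow> real^'k^'n \<Rightarrow> bool) \<Rightarrow> bool" where
  "lmi_gram_representable C \<longleftrightarrow>
     (\<exists>Ls :: ((real^(('n \<times> 'k) + ('n \<times> 'k))^(('n \<times> 'k) + ('n \<times> 'k)) \<Rightarrow> real^'k^'k) \<times> (real^'k^'k)) list.
        (\<forall>(L, B) \<in> set Ls. linear L) \<and>
        (\<forall>X Y. C X Y \<longleftrightarrow> (\<forall>(L, B) \<in> set Ls. psd (L (gram X Y) + B))))"

end

theory Submission
  imports Defs
begin

(* Only the Rayleigh quotient of W on the W-invariant hyperplane V = ones^perp matters. On V the
   minimum of v.Wv / v.v is attained at an eigenvector, so the eigenvalue hypothesis gives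
   lm |v|^2 <= v.Wv <= lp |v|^2 on V (the upper bound is the lower bound for -W). With c and r the
   midpoint and half-length of [lm, lp], polarisation upgrades |v.(W - c)v| <= r |v|^2 to
   |(W - c)v| <= r |v|, which is (Wv - lm v).(Wv - lp v) <= 0. As Y_c = W X_c and every X_c x lies
   in V, the three matrix inequalities are these scalar bounds at v = X_c x.
   For representability: if F and G are linear in the entries of X and Y, then F^T G is a linear
   function of their Gram matrix, and each constraint says that finitely many such matrices are
   psd; equality of the averages is psd (-D^T D) for D = (X - X_c) - (Y - Y_c). *)

lemma quadratic_nonneg_imp_linear_coeff_zero:
  fixes a d :: real
  assumes "\<And>t. 0 \<le> 2 * d * t + a * t\<^sup>2"
  shows "d = 0"
proof -
  define s where "s = 1 / (\<bar>a\<bar> + 1)"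
  have s: "0 < s" "a * s < 1"
    by (auto simp: s_def field_simps abs_if)
  have "0 \<le> 2 * d * (- s * d) + a * (- s * d)\<^sup>2" by (rule assms)
  also have "\<dots> = s * d\<^sup>2 * (a * s - 2)" by (simp add: power2_eq_square algebra_simps)
  finally have "0 \<le> s * d\<^sup>2 * (a * s - 2)" .
  moreover have "s * d\<^sup>2 * (a * s - 2) < 0" if "d \<noteq> 0"
    using s that by (intro mult_pos_neg) auto
  ultimately show ?thesis by fastforce
qed

lemma inner_matrix_vector_symmetric:
  fixes A :: "real^'n^'n"
  assumes "transpose A = A"
  shows "x \<bullet> (A *v y) = (A *v x) \<bullet> y"
  by (metis assms dot_lmul_matrix transpose_matrix_vector)

lemma rayleigh_minimum_on_subspace:
  fixes A :: "real^'n^'n"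
  assumes "subspace S" "S \<noteq> {0}"
  obtains u where "u \<in> S" "u \<bullet> u = 1"
    "\<And>v. v \<in> S \<Longrightarrow> (u \<bullet> (A *v u)) * (v \<bullet> v) \<le> v \<bullet> (A *v v)"
proof -
  define sphere_S where "sphere_S = S \<inter> sphere 0 1"
  have "compact sphere_S"
    unfolding sphere_S_def using closed_subspace[OF assms(1)] by (intro closed_Int_compact) auto
  moreover obtain v0 where "v0 \<in> S" "v0 \<noteq> 0" using assms subspace_0 by blast
  then have "v0 /\<^sub>R norm v0 \<in> sphere_S"
    using assms(1) by (simp add: sphere_S_def subspace_scale)
  moreover have "continuous_on sphere_S (\<lambda>w. w \<bullet> (A *v w))"
    by (intro continuous_intros linear_continuous_on matrix_vector_mul_bounded_linear)
  ultimately obtain u where u: "u \<in> sphere_S"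
    and min: "\<And>w. w \<in> sphere_S \<Longrightarrow> u \<bullet> (A *v u) \<le> w \<bullet> (A *v w)"
    using continuous_attains_inf[of sphere_S "\<lambda>w. w \<bullet> (A *v w)"] by blast
  have "(u \<bullet> (A *v u)) * (v \<bullet> v) \<le> v \<bullet> (A *v v)" if "v \<in> S" for v
  proof (cases "v = 0")
    case False
    then have "v /\<^sub>R norm v \<in> sphere_S"
      using that assms(1) by (simp add: sphere_S_def subspace_scale)
    then have "u \<bullet> (A *v u) \<le> (v /\<^sub>R norm v) \<bullet> (A *v (v /\<^sub>R norm v))"
      by (rule min)
    also have "\<dots> = (v \<bullet> (A *v v)) / (norm v)\<^sup>2"
      by (simp add: matrix_vector_mult_scaleR power2_eq_square field_simps)
    finally have "u \<bullet> (A *v u) \<le> (v \<bullet> (A *v v)) / (norm v)\<^sup>2" .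
    then show ?thesis
      using False by (simp add: field_simps power2_norm_eq_inner)
  qed simp
  moreover have "u \<in> S" "u \<bullet> u = 1" using u by (auto simp: sphere_S_def norm_eq_1)
  ultimately show ?thesis using that by blast
qed

lemma symmetric_rayleigh_minimizer_eigenvector:
  fixes A :: "real^'n^'n"
  assumes sym: "transpose A = A" and S: "subspace S" and inv: "\<And>v. v \<in> S \<Longrightarrow> A *v v \<in> S"
    and low: "\<And>v. v \<in> S \<Longrightarrow> m * (v \<bullet> v) \<le> v \<bullet> (A *v v)"
    and u: "u \<in> S" "u \<bullet> (A *v u) = m * (u \<bullet> u)"
  shows "A *v u = m *\<^sub>R u"
proof -
  define b where "b = A *v u - m *\<^sub>R u"
  have "w \<bullet> b = 0" if w: "w \<in> S" for w
  proof (rule quadratic_nonneg_imp_linear_coeff_zero)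
    fix t :: real
    have "u + t *\<^sub>R w \<in> S" using S u w by (simp add: subspace_add subspace_scale)
    then have "0 \<le> (u + t *\<^sub>R w) \<bullet> (A *v (u + t *\<^sub>R w)) - m * ((u + t *\<^sub>R w) \<bullet> (u + t *\<^sub>R w))"
      using low by simp
    also have "\<dots> = 2 * (w \<bullet> b) * t + (w \<bullet> (A *v w) - m * (w \<bullet> w)) * t\<^sup>2"
      using u(2) inner_matrix_vector_symmetric[OF sym, of u w]
      by (simp add: b_def matrix_vector_right_distrib matrix_vector_mult_scaleR inner_simps
          inner_commute power2_eq_square algebra_simps)
    finally show "0 \<le> 2 * (w \<bullet> b) * t + (w \<bullet> (A *v w) - m * (w \<bullet> w)) * t\<^sup>2" .
  qed
  moreover have "b \<in> S" using S inv u(1) by (simp add: b_def subspace_diff subspace_scale)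
  ultimately have "b \<bullet> b = 0" by blast
  then have "b = 0" by simp
  then show ?thesis by (simp add: b_def)
qed

lemma symmetric_min_eigenvalue_on_invariant_subspace:
  fixes A :: "real^'n^'n"
  assumes "transpose A = A" "subspace S" "\<And>v. v \<in> S \<Longrightarrow> A *v v \<in> S" "S \<noteq> {0}"
  obtains u m where "u \<in> S" "u \<noteq> 0" "A *v u = m *\<^sub>R u"
    "\<And>v. v \<in> S \<Longrightarrow> m * (v \<bullet> v) \<le> v \<bullet> (A *v v)"
proof -
  obtain u where u: "u \<in> S" "u \<bullet> u = 1"
    and low: "\<And>v. v \<in> S \<Longrightarrow> (u \<bullet> (A *v u)) * (v \<bullet> v) \<le> v \<bullet> (A *v v)"
    using rayleigh_minimum_on_subspace[OF assms(2,4)] by blast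
  have "A *v u = (u \<bullet> (A *v u)) *\<^sub>R u"
    using u by (intro symmetric_rayleigh_minimizer_eigenvector[OF assms(1-3) low]) auto
  moreover have "u \<noteq> 0" using u(2) by auto
  ultimately show ?thesis using that u(1) low by blast
qed

lemma symmetric_norm_le_numerical_radius:
  fixes B :: "real^'n^'n"
  assumes sym: "transpose B = B" and S: "subspace S" and inv: "\<And>v. v \<in> S \<Longrightarrow> B *v v \<in> S"
    and bound: "\<And>y. y \<in> S \<Longrightarrow> \<bar>y \<bullet> (B *v y)\<bar> \<le> r * (y \<bullet> y)" and v: "v \<in> S"
  shows "(B *v v) \<bullet> (B *v v) \<le> r\<^sup>2 * (v \<bullet> v)"
proof -
  define w where "w = B *v v"
  have polar: "4 * s * (w \<bullet> w) \<le> 2 * r * (s\<^sup>2 * (w \<bullet> w) + v \<bullet> v)" for s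
  proof -
    define y1 y2 where "y1 = s *\<^sub>R w + v" and "y2 = s *\<^sub>R w - v"
    have "y1 \<in> S" "y2 \<in> S"
      using S inv v by (simp_all add: y1_def y2_def w_def subspace_add subspace_diff subspace_scale)
    have "4 * s * (w \<bullet> w) = y1 \<bullet> (B *v y1) - y2 \<bullet> (B *v y2)"
      using inner_matrix_vector_symmetric[OF sym, of v w]
      by (simp add: y1_def y2_def w_def matrix_vector_right_distrib matrix_vector_mult_diff_distrib
          matrix_vector_mult_scaleR inner_simps inner_commute algebra_simps)
    also have "\<dots> \<le> r * (y1 \<bullet> y1) + r * (y2 \<bullet> y2)"
      using bound[OF \<open>y1 \<in> S\<close>] bound[OF \<open>y2 \<in> S\<close>] by linarith
    also have "\<dots> = 2 * r * (s\<^sup>2 * (w \<bullet> w) + v \<bullet> v)"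
      by (simp add: y1_def y2_def inner_simps inner_commute algebra_simps power2_eq_square)
    finally show ?thesis .
  qed
  consider "r < 0" | "r = 0" | "r > 0" by linarith
  then show ?thesis
  proof cases
    case 1
    then have "v \<bullet> v \<le> 0"
      using bound[OF v] by (smt (verit) inner_ge_zero mult_neg_pos)
    then have "v = 0" by (metis inner_eq_zero_iff inner_ge_zero order_antisym)
    then show ?thesis by (simp add: w_def)
  next
    case 2
    then show ?thesis using polar[of 1] by (simp add: w_def)
  next
    case 3
    then have "4 * (w \<bullet> w) \<le> 2 * (w \<bullet> w) + 2 * r\<^sup>2 * (v \<bullet> v)"
      using polar[of "1 / r"] by (simp add: field_simps power2_eq_square)
    then show ?thesis by (simp add: w_def)
  qed
qed

lemma gen_doubly_stochastic_preserves_orthogonal_ones: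
  assumes "gen_doubly_stochastic W" "v \<bullet> ones = 0"
  shows "(W *v v) \<bullet> ones = 0"
proof -
  have "transpose W *v ones = ones"
    using assms(1) by (simp add: gen_doubly_stochastic_def ones_def transpose_def
        matrix_vector_mult_def vec_eq_iff)
  then show ?thesis
    using assms(2) dot_lmul_matrix[of ones W v] by (simp add: inner_commute)
qed

lemma matrix_vector_mult_uminus_left: "(- A) *v x = - (A *v (x :: real^'n))"
  by (simp add: matrix_vector_mult_def sum_negf vec_eq_iff)

lemma symmetric_rayleigh_ge_eigenvalue_bound:
  fixes A :: "real^'n^'n"
  assumes sym: "transpose A = A" and S: "subspace S" and inv: "\<And>v. v \<in> S \<Longrightarrow> A *v v \<in> S"
    and eig: "\<And>u \<mu>. u \<in> S \<Longrightarrow> u \<noteq> 0 \<Longrightarrow> A *v u = \<mu> *\<^sub>R u \<Longrightarrow> l \<le> \<mu>"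
    and v: "v \<in> S"
  shows "l * (v \<bullet> v) \<le> v \<bullet> (A *v v)"
proof (cases "S = {0}")
  case True
  then show ?thesis using v by simp
next
  case False
  obtain u m where "u \<in> S" "u \<noteq> 0" "A *v u = m *\<^sub>R u"
    and min: "\<And>v. v \<in> S \<Longrightarrow> m * (v \<bullet> v) \<le> v \<bullet> (A *v v)"
    using symmetric_min_eigenvalue_on_invariant_subspace[OF sym S inv False] by blast
  then have "l \<le> m" using eig by blast
  then have "l * (v \<bullet> v) \<le> m * (v \<bullet> v)" by (simp add: mult_right_mono)
  also have "\<dots> \<le> v \<bullet> (A *v v)" using min[OF v] .
  finally show ?thesis .
qed

lemma W_class_rayleigh_bounds:
  fixes W :: "real^'n^'n"
  assumes WC: "W_class lm lp W" and v: "v \<bullet> ones = 0"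
  shows "lm * (v \<bullet> v) \<le> v \<bullet> (W *v v)" "v \<bullet> (W *v v) \<le> lp * (v \<bullet> v)"
proof -
  let ?S = "{v::real^'n. v \<bullet> ones = 0}"
  have sym: "transpose W = W" and ds: "gen_doubly_stochastic W"
    and eig: "\<And>u \<mu>. u \<in> ?S \<Longrightarrow> u \<noteq> 0 \<Longrightarrow> W *v u = \<mu> *\<^sub>R u \<Longrightarrow> lm \<le> \<mu> \<and> \<mu> \<le> lp"
    using WC by (auto simp: W_class_def symmetric_mat_def)
  have S: "subspace ?S" by (rule subspace_hyperplane2)
  have inv: "\<And>v. v \<in> ?S \<Longrightarrow> W *v v \<in> ?S"
    using gen_doubly_stochastic_preserves_orthogonal_ones[OF ds] by simp
  show "lm * (v \<bullet> v) \<le> v \<bullet> (W *v v)"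
    using symmetric_rayleigh_ge_eigenvalue_bound[OF sym S inv, of lm v] eig v by blast
  have "transpose (- W) = - W"
    using sym by (metis transpose_scalar scaleR_minus1_left)
  moreover have "\<And>v. v \<in> ?S \<Longrightarrow> (- W) *v v \<in> ?S"
    using inv by (simp add: matrix_vector_mult_uminus_left)
  moreover have "- lp \<le> \<mu>" if "u \<in> ?S" "u \<noteq> 0" "(- W) *v u = \<mu> *\<^sub>R u" for u \<mu>
  proof -
    have "W *v u = (- \<mu>) *\<^sub>R u"
      using that(3) by (metis matrix_vector_mult_uminus_left minus_minus scaleR_minus_left)
    then show ?thesis using eig[OF that(1,2), of "- \<mu>"] by linarith
  qed
  ultimately have "- lp * (v \<bullet> v) \<le> v \<bullet> ((- W) *v v)"
    using v by (intro symmetric_rayleigh_ge_eigenvalue_bound[OF _ S]) auto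
  then show "v \<bullet> (W *v v) \<le> lp * (v \<bullet> v)"
    by (simp add: matrix_vector_mult_uminus_left)
qed

lemma W_class_product_bound:
  fixes W :: "real^'n^'n"
  assumes WC: "W_class lm lp W" and v: "v \<bullet> ones = 0"
  shows "(W *v v - lm *\<^sub>R v) \<bullet> (W *v v - lp *\<^sub>R v) \<le> 0"
proof -
  let ?S = "{v::real^'n. v \<bullet> ones = 0}"
  define c r where "c = (lm + lp) / 2" and "r = (lp - lm) / 2"
  have lm_lp: "lm = c - r" "lp = c + r" by (simp_all add: c_def r_def field_simps)
  define B where "B = W - c *\<^sub>R mat 1"
  have "transpose W = W" and ds: "gen_doubly_stochastic W"
    using WC by (auto simp: W_class_def symmetric_mat_def)
  then have sym: "transpose B = B"
    by (simp add: B_def transpose_def mat_def vec_eq_iff)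
  have Bv: "B *v y = W *v y - c *\<^sub>R y" for y
    by (simp add: B_def matrix_vector_mult_diff_rdistrib flip: scaleR_matrix_vector_assoc)
  have S: "subspace ?S" by (rule subspace_hyperplane2)
  have inv: "B *v y \<in> ?S" if "y \<in> ?S" for y
    using that gen_doubly_stochastic_preserves_orthogonal_ones[OF ds, of y] by (simp add: Bv inner_simps)
  have "\<bar>y \<bullet> (B *v y)\<bar> \<le> r * (y \<bullet> y)" if "y \<in> ?S" for y
    using W_class_rayleigh_bounds[OF WC, of y] that
    by (simp add: Bv inner_simps c_def r_def abs_le_iff field_simps)
  then have "(B *v v) \<bullet> (B *v v) \<le> r\<^sup>2 * (v \<bullet> v)"
    using symmetric_norm_le_numerical_radius[OF sym S inv] v by blast
  moreover have "W *v v - lm *\<^sub>R v = B *v v + r *\<^sub>R v" "W *v v - lp *\<^sub>R v = B *v v - r *\<^sub>R v"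
    by (simp_all add: Bv lm_lp algebra_simps)
  ultimately show ?thesis
    by (simp add: inner_simps inner_commute power2_eq_square)
qed

lemma quadratic_form_transpose_mult:
  fixes A B :: "real^'k^'n"
  shows "x \<bullet> ((transpose A ** B) *v x) = (A *v x) \<bullet> (B *v x)"
  by (metis dot_lmul_matrix inner_commute matrix_vector_mul_assoc transpose_matrix_vector)

lemma loewner_le_iff_quadratic_form:
  "A \<preceq>\<^sub>L B \<longleftrightarrow> (\<forall>x. x \<bullet> (A *v x) \<le> x \<bullet> (B *v x))"
  by (simp add: loewner_le_def psd_def matrix_vector_mult_diff_rdistrib inner_diff_right)

lemma W_class_loewner_bounds:
  fixes W :: "real^'n^'n" and U :: "real^'k^'n"
  assumes WC: "W_class lm lp W" and U: "\<And>x. (U *v x) \<bullet> ones = 0"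
  shows "lm *\<^sub>R (transpose U ** U) \<preceq>\<^sub>L transpose U ** (W ** U)"
    and "transpose U ** (W ** U) \<preceq>\<^sub>L lp *\<^sub>R (transpose U ** U)"
    and "transpose (W ** U - lm *\<^sub>R U) ** (W ** U - lp *\<^sub>R U) \<preceq>\<^sub>L 0"
  unfolding loewner_le_iff_quadratic_form scaleR_matrix_vector_assoc[symmetric] inner_scaleR_right
  unfolding quadratic_form_transpose_mult
  unfolding matrix_vector_mult_diff_rdistrib scaleR_matrix_vector_assoc[symmetric]
    matrix_vector_mul_assoc[symmetric]
  using W_class_rayleigh_bounds[OF WC U] W_class_product_bound[OF WC U] by simp_all

lemma symmetric_mat_congruence:
  assumes "symmetric_mat W"
  shows "symmetric_mat (transpose Z ** (W ** Z))"
  using assms by (simp add: symmetric_mat_def matrix_transpose_mul matrix_mul_assoc)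

lemma colavg_doubly_stochastic_mult:
  assumes "gen_doubly_stochastic W"
  shows "colavg (W ** X) = colavg X"
proof -
  have "(\<Sum>i\<in>UNIV. (W ** X)$i$k) = (\<Sum>j\<in>UNIV. X$j$k)" for k
  proof -
    have "(\<Sum>i\<in>UNIV. (W ** X)$i$k) = (\<Sum>j\<in>UNIV. (\<Sum>i\<in>UNIV. W$i$j) * X$j$k)"
      by (simp add: matrix_matrix_mult_def sum_distrib_right) (rule sum.swap)
    then show ?thesis using assms by (simp add: gen_doubly_stochastic_def)
  qed
  then show ?thesis by (simp add: colavg_def vec_eq_iff)
qed

lemma centered_doubly_stochastic_mult:
  assumes "gen_doubly_stochastic W"
  shows "centered (W ** X) = W ** centered X"
proof -
  have "(\<Sum>j\<in>UNIV. W$i$j * (X$j$k - colavg X $ k))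
      = (\<Sum>j\<in>UNIV. W$i$j * X$j$k) - (\<Sum>j\<in>UNIV. W$i$j) * colavg X $ k" for i k
    by (simp add: right_diff_distrib sum_subtractf sum_distrib_right)
  then show ?thesis
    using assms colavg_doubly_stochastic_mult[OF assms, of X]
    by (simp add: gen_doubly_stochastic_def centered_def vec_eq_iff matrix_matrix_mult_def)
qed

lemma centered_mult_vector_orthogonal_ones:
  fixes X :: "real^'k^'n"
  shows "(centered X *v x) \<bullet> ones = 0"
proof -
  have "(centered X *v x) \<bullet> ones = (\<Sum>i\<in>UNIV. \<Sum>k\<in>UNIV. (X$i$k - colavg X $ k) * x$k)"
    by (simp add: ones_def inner_vec_def matrix_vector_mult_def centered_def)
  also have "\<dots> = (\<Sum>k\<in>UNIV. ((\<Sum>i\<in>UNIV. X$i$k) - real CARD('n) * colavg X $ k) * x$k)"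
    by (subst sum.swap) (simp add: sum_distrib_right sum_subtractf left_diff_distrib mult.assoc)
  also have "\<dots> = 0" by (simp add: colavg_def)
  finally show ?thesis .
qed

lemma matrix_mult_diff_distrib_left: "A ** (B - C) = A ** B - A ** (C :: real^'p^'m)"
  by (simp add: matrix_matrix_mult_def vec_eq_iff right_diff_distrib sum_subtractf)

lemma transpose_uminus_mult: "transpose (- A) ** B = - (transpose A ** (B :: real^'p^'m))"
  by (simp add: matrix_matrix_mult_def transpose_def vec_eq_iff sum_negf)

lemma psd_neg_gram_iff:
  fixes F :: "real^'k^'n"
  shows "psd (- (transpose F ** F)) \<longleftrightarrow> F = 0"
proof
  assume psd: "psd (- (transpose F ** F))"
  have "F *v x = 0" for x
  proof -
    have "0 \<le> x \<bullet> (- (transpose F ** F) *v x)" using psd by (simp add: psd_def)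
    also have "\<dots> = - ((F *v x) \<bullet> (F *v x))"
      by (simp add: matrix_vector_mult_uminus_left quadratic_form_transpose_mult)
    finally have "(F *v x) \<bullet> (F *v x) \<le> 0" by simp
    then show ?thesis by (metis inner_eq_zero_iff inner_ge_zero order_antisym)
  qed
  then have "column k F = 0" for k using matrix_vector_mult_basis[of F k] by simp
  then show "F = 0" by (simp add: column_def vec_eq_iff)
qed (simp add: psd_def)

definition gram_form ::
    "(real^'v \<Rightarrow> real^'k^'m) \<Rightarrow> (real^'v \<Rightarrow> real^'k^'m) \<Rightarrow> real^'v^'v \<Rightarrow> real^'k^'k" where
  "gram_form f g G =
     (\<chi> k l. \<Sum>i\<in>UNIV. \<Sum>a\<in>UNIV. \<Sum>b\<in>UNIV. f (axis a 1) $ i $ k * g (axis b 1) $ i $ l * G $ a $ b)"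

lemma linear_gram_form: "linear (gram_form f g)"
  by (rule linearI) (simp_all add: gram_form_def vec_eq_iff algebra_simps sum.distrib sum_distrib_left)

lemma linear_basis_expansion:
  fixes f :: "real^'v \<Rightarrow> 'b::real_vector"
  assumes "linear f"
  shows "f v = (\<Sum>a\<in>UNIV. v $ a *\<^sub>R f (axis a 1))"
proof -
  have "f v = f (\<Sum>a\<in>UNIV. v $ a *\<^sub>R axis a 1)"
    using basis_expansion[of v] by (simp add: scalar_mult_eq_scaleR)
  then show ?thesis
    using assms by (simp add: linear_sum linear_scale)
qed

lemma gram_form_outer_product:
  assumes "linear f" "linear g"
  shows "gram_form f g (\<chi> a b. v $ a * v $ b) = transpose (f v) ** g v"
proof -
  have f: "f v $ i $ k = (\<Sum>a\<in>UNIV. v $ a * f (axis a 1) $ i $ k)"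
    and g: "g v $ i $ l = (\<Sum>b\<in>UNIV. v $ b * g (axis b 1) $ i $ l)" for i k l
    by (subst linear_basis_expansion[OF assms(1)] linear_basis_expansion[OF assms(2)],
        simp add: sum_component)+
  show ?thesis
    by (simp add: gram_form_def vec_eq_iff matrix_matrix_mult_def transpose_def f g
        sum_product mult_ac)
qed

definition split_vars :: "real^(('n \<times> 'k) + ('n \<times> 'k)) \<Rightarrow> (real^'k^'n) \<times> (real^'k^'n)" where
  "split_vars v = ((\<chi> i k. v $ Inl (i, k)), (\<chi> i k. v $ Inr (i, k)))"

lemma linear_split_vars: "linear split_vars"
  by (rule linearI) (simp_all add: split_vars_def vec_eq_iff)

lemma split_vars_gram_vars: "split_vars (gram_vars X Y) = (X, Y)"
  by (simp add: split_vars_def gram_vars_def vec_eq_iff)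

lemma lmi_gram_representable_bilinear_psd:
  fixes Ps :: "(((real^'k^'n) \<times> (real^'k^'n) \<Rightarrow> real^'k^'m) \<times> ((real^'k^'n) \<times> (real^'k^'n) \<Rightarrow> real^'k^'m)) list"
  assumes lin: "\<forall>(f, g) \<in> set Ps. linear f \<and> linear g"
    and C: "\<And>X Y. C X Y \<longleftrightarrow> (\<forall>(f, g) \<in> set Ps. psd (transpose (f (X, Y)) ** g (X, Y)))"
  shows "lmi_gram_representable C"
  unfolding lmi_gram_representable_def
proof (intro exI conjI allI)
  let ?Ls = "map (\<lambda>(f, g). (gram_form (f \<circ> split_vars) (g \<circ> split_vars), 0)) Ps"
  show "\<forall>(L, B) \<in> set ?Ls. linear L"
    by (auto simp: linear_gram_form)
  fix X Y :: "real^'k^'n"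
  have "gram_form (f \<circ> split_vars) (g \<circ> split_vars) (gram X Y) = transpose (f (X, Y)) ** g (X, Y)"
    if "linear f" "linear g" for f g :: "(real^'k^'n) \<times> (real^'k^'n) \<Rightarrow> real^'k^'m"
    using gram_form_outer_product[OF linear_compose[OF linear_split_vars that(1)]
        linear_compose[OF linear_split_vars that(2)], of "gram_vars X Y"]
    by (simp add: gram_def split_vars_gram_vars)
  then show "C X Y \<longleftrightarrow> (\<forall>(L, B) \<in> set ?Ls. psd (L (gram X Y) + B))"
    using lin by (fastforce simp: C)
qed

lemma linear_centered: "linear (centered :: real^'k^'n \<Rightarrow> real^'k^'n)"
  by (rule linearI)
    (simp_all add: centered_def colavg_def vec_eq_iff sum.distrib algebra_simps add_divide_distrib
      sum_distrib_left[symmetric])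

lemma linear_centered_fst: "linear (\<lambda>p :: (real^'k^'n) \<times> (real^'k^'n). centered (fst p))"
  using linear_compose[OF linear_fst linear_centered] by (simp add: o_def)

lemma linear_centered_snd: "linear (\<lambda>p :: (real^'k^'n) \<times> (real^'k^'n). centered (snd p))"
  using linear_compose[OF linear_snd linear_centered] by (simp add: o_def)

lemma lmi_gram_representable_colavg_eq:
  "lmi_gram_representable (\<lambda>(X :: real^'k^'n) Y. colavg X = colavg Y)"
proof -
  define D :: "(real^'k^'n) \<times> (real^'k^'n) \<Rightarrow> real^'k^'n"
    where "D p = (fst p - centered (fst p)) - (snd p - centered (snd p))" for p
  have "linear D"
    unfolding D_def
    by (intro linear_compose_sub linear_fst linear_snd linear_centered_fst linear_centered_snd)
  moreover have "colavg X = colavg Y \<longleftrightarrow> D (X, Y) = 0" for X Y :: "real^'k^'n"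
    by (simp add: D_def centered_def vec_eq_iff)
  ultimately show ?thesis
    by (intro lmi_gram_representable_bilinear_psd[where Ps = "[(\<lambda>p. - D p, D)]"])
      (simp_all add: linear_compose_neg transpose_uminus_mult psd_neg_gram_iff)
qed

lemma lmi_gram_representable_loewner_interval:
  "lmi_gram_representable (\<lambda>(X :: real^'k^'n) Y.
     lm *\<^sub>R (transpose (centered X) ** centered X) \<preceq>\<^sub>L transpose (centered X) ** centered Y
   \<and> transpose (centered X) ** centered Y \<preceq>\<^sub>L lp *\<^sub>R (transpose (centered X) ** centered X))"
  by (rule lmi_gram_representable_bilinear_psd[where Ps =
      "[(\<lambda>p :: (real^'k^'n) \<times> (real^'k^'n). centered (fst p),
         \<lambda>p. centered (snd p) - lm *\<^sub>R centered (fst p)),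
        (\<lambda>p. centered (fst p), \<lambda>p. lp *\<^sub>R centered (fst p) - centered (snd p))]"])
    (simp_all add: linear_centered_fst linear_centered_snd linear_compose_sub
      linear_compose_scale_right loewner_le_def matrix_mult_diff_distrib_left matrix_scalar_ac
      scalar_matrix_assoc)

lemma lmi_gram_representable_product_nonpos:
  "lmi_gram_representable (\<lambda>(X :: real^'k^'n) Y.
     transpose (centered Y - lm *\<^sub>R centered X) ** (centered Y - lp *\<^sub>R centered X) \<preceq>\<^sub>L 0)"
  by (rule lmi_gram_representable_bilinear_psd[where Ps =
      "[(\<lambda>p :: (real^'k^'n) \<times> (real^'k^'n). - (centered (snd p) - lm *\<^sub>R centered (fst p)),
         \<lambda>p. centered (snd p) - lp *\<^sub>R centered (fst p))]"])
    (simp_all add: linear_centered_fst linear_centered_snd linear_compose_sub linear_compose_neg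
      linear_compose_scale_right loewner_le_def flip: transpose_uminus_mult)

theorem theorem2:
  fixes W :: "real^'n^'n" and X Y :: "real^'k^'n" and lm lp :: real
  assumes "-1 \<le> lm" "lm \<le> 1" "-1 \<le> lp" "lp \<le> 1"
    and "W_class lm lp W"
    and "Y = W ** X"
  shows "symmetric_mat (transpose X ** Y)
       \<and> symmetric_mat (transpose (centered X) ** centered Y)
       \<and> colavg X = colavg Y
       \<and> lm *\<^sub>R (transpose (centered X) ** centered X) \<preceq>\<^sub>L transpose (centered X) ** centered Y
       \<and> transpose (centered X) ** centered Y \<preceq>\<^sub>L lp *\<^sub>R (transpose (centered X) ** centered X)
       \<and> transpose (centered Y - lm *\<^sub>R centered X) ** (centered Y - lp *\<^sub>R centered X) \<preceq>\<^sub>L 0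
       \<and> lmi_gram_representable (\<lambda>(X'::real^'k^'n) Y'. colavg X' = colavg Y')
       \<and> lmi_gram_representable (\<lambda>(X'::real^'k^'n) Y'.
            lm *\<^sub>R (transpose (centered X') ** centered X') \<preceq>\<^sub>L transpose (centered X') ** centered Y'
          \<and> transpose (centered X') ** centered Y' \<preceq>\<^sub>L lp *\<^sub>R (transpose (centered X') ** centered X'))
       \<and> lmi_gram_representable (\<lambda>(X'::real^'k^'n) Y'.
            transpose (centered Y' - lm *\<^sub>R centered X') ** (centered Y' - lp *\<^sub>R centered X') \<preceq>\<^sub>L 0)"
proof -
  have WC: "W_class lm lp W" and Y: "Y = W ** X" by fact+
  then have sym: "symmetric_mat W" and ds: "gen_doubly_stochastic W"
    by (simp_all add: W_class_def)
  have cY: "centered Y = W ** centered X"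
    using Y centered_doubly_stochastic_mult[OF ds] by simp
  have "symmetric_mat (transpose X ** Y)" "symmetric_mat (transpose (centered X) ** centered Y)"
    using symmetric_mat_congruence[OF sym] Y cY by simp_all
  moreover have "colavg X = colavg Y"
    using colavg_doubly_stochastic_mult[OF ds, of X] Y by simp
  moreover note W_class_loewner_bounds[OF WC centered_mult_vector_orthogonal_ones[of X], folded cY]
  ultimately show ?thesis
    using lmi_gram_representable_colavg_eq lmi_gram_representable_loewner_interval
      lmi_gram_representable_product_nonpos by blast
qed

end
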